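(* Let $D\ge 2$, $T\ge 3$, $N\ge 3$ and let $S\in(\{0\}\cup\mathbb{N}\cup\{\infty\})^{T\times N}$. Suppose there are three distinct columns $j_1,j_2,j_3$ and three distinct rows $t_1,t_2,t_3$ such that each of the columns $j_1,j_2,j_3$ has finite entries only in rows among $t_1,t_2,t_3$, and the $3\times 3$ submatrix on rows $t_1,t_2,t_3$ and columns $j_1,j_2,j_3$ has the form $$\begin{pmatrix}\delta&\varepsilon&\infty\\ \zeta&\infty&\eta\\ \infty&\vartheta&\kappa\end{pmatrix}$$ with $\delta,\varepsilon,\zeta,\eta,\vartheta,\kappa$ finite. Then $S$ is not a $(T,N,D)$-tropical code.
   Context: Tropical arithmetic on $\mathbb{R}\cup\{\infty\}$: $x\oplus y=\min(x,y)$, $x\odot y=x+y$, with $x\oplus\infty=x$ and $x\odot\infty=\infty$. For a matrix $S$ with $T$ rows and $N$ columns and a column vector $\mathbf{x}$ of length $N$, $S\odot\mathbf{x}$ is the vector whose $t$-th entry is $\min_{j}(S_{tj}+x_j)$. A $(T,N,D)$-tropical code is a matrix $S\in(\{0\}\cup\mathbb{N}\cup\{\infty\})^{T\times N}$ such that for any two distinct vectors $\mathbf{x},\mathbf{y}\in(\{0\}\cup\mathbb{N}\cup\{\infty\})^{N}$, each having at most $D$ finite entries, $S\odot\mathbf{x}\ne S\odot\mathbf{y}$. *)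

theory Defs
  imports Main "HOL-Library.Extended_Nat"
begin

text \<open>Entries in {0} \<union> \<nat> \<union> {\<infinity>} are modelled by enat; tropical addition is min,
  tropical multiplication is +. A T x N matrix is a function nat \<Rightarrow> nat \<Rightarrow> enat,
  only rows t < T and columns j < N are relevant. A vector of length N is a function
  nat \<Rightarrow> enat whose entries at indices j \<ge> N are \<infinity> (canonical representative).\<close>

definition trop_mult_vec :: "nat \<Rightarrow> (nat \<Rightarrow> nat \<Rightarrow> enat) \<Rightarrow> (nat \<Rightarrow> enat) \<Rightarrow> nat \<Rightarrow> enat" where
  "trop_mult_vec N S x t = (INF j\<in>{..<N}. S t j + x j)"

definition vec_space :: "nat \<Rightarrow> nat \<Rightarrow> (nat \<Rightarrow> enat) set" where
  "vec_space N D = {x. (\<forall>j\<ge>N. x j = \<infinity>) \<and> card {j. j < N \<and> x j \<noteq> \<infinity>} \<le> D}"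

definition tropical_code :: "nat \<Rightarrow> nat \<Rightarrow> nat \<Rightarrow> (nat \<Rightarrow> nat \<Rightarrow> enat) \<Rightarrow> bool" where
  "tropical_code T N D S \<longleftrightarrow>
     (\<forall>x\<in>vec_space N D. \<forall>y\<in>vec_space N D. x \<noteq> y \<longrightarrow>
        (\<exists>t<T. trop_mult_vec N S x t \<noteq> trop_mult_vec N S y t))"

end

theory Submission
  imports Defs
begin

text \<open>Take \<open>x\<close> with finite entries \<open>0\<close> at \<open>j\<^sub>1\<close> and \<open>\<kappa> + \<delta> + \<zeta>\<close> at \<open>j\<^sub>2\<close>, and \<open>y\<close> with
  finite entries \<open>0\<close> at \<open>j\<^sub>1\<close> and \<open>\<theta> + \<delta> + \<zeta>\<close> at \<open>j\<^sub>3\<close>. The large shifts make the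
  \<open>j\<^sub>1\<close>-term win in rows \<open>t\<^sub>1\<close> and \<open>t\<^sub>2\<close>, giving \<open>\<delta>\<close> and \<open>\<zeta>\<close> for both vectors, while
  in row \<open>t\<^sub>3\<close> both vectors give \<open>\<theta> + \<kappa> + \<delta> + \<zeta>\<close>; every other row is \<open>\<infinity>\<close>.\<close>

definition two_point_vec :: "nat \<Rightarrow> enat \<Rightarrow> nat \<Rightarrow> enat \<Rightarrow> nat \<Rightarrow> enat" where
  "two_point_vec a u b v = (\<lambda>j. if j = a then u else if j = b then v else \<infinity>)"

lemma INF_eq_inf_if_top_outside:
  fixes f :: "'i \<Rightarrow> 'a::complete_lattice"
  assumes "a \<in> A" "b \<in> A" "\<And>j. j \<in> A \<Longrightarrow> j \<noteq> a \<Longrightarrow> j \<noteq> b \<Longrightarrow> f j = top"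
  shows "(INF j\<in>A. f j) = inf (f a) (f b)"
proof -
  have "A = {a, b} \<union> (A - {a, b})" using assms(1,2) by auto
  then have "(INF j\<in>A. f j) = inf (INF j\<in>{a, b}. f j) (INF j\<in>A - {a, b}. f j)"
    by (metis INF_union)
  also have "(INF j\<in>A - {a, b}. f j) = top"
    using assms(3) by (auto intro!: INF_eqI)
  finally show ?thesis by simp
qed

lemma two_point_vec_in_vec_space:
  assumes "a < N" "b < N" "D \<ge> 2"
  shows "two_point_vec a u b v \<in> vec_space N D"
proof -
  have "{j. j < N \<and> two_point_vec a u b v j \<noteq> \<infinity>} \<subseteq> {a, b}"
    by (auto simp: two_point_vec_def)
  then have "card {j. j < N \<and> two_point_vec a u b v j \<noteq> \<infinity>} \<le> card {a, b}"
    by (rule card_mono[rotated]) simp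
  also have "\<dots> \<le> D" using assms(3) by (simp add: card_insert_if)
  finally show ?thesis
    using assms(1,2) by (auto simp: vec_space_def two_point_vec_def)
qed

lemma trop_mult_two_point_vec:
  assumes "a < N" "b < N" "a \<noteq> b"
  shows "trop_mult_vec N S (two_point_vec a u b v) t = min (S t a + u) (S t b + v)"
  unfolding trop_mult_vec_def
  by (subst INF_eq_inf_if_top_outside[OF lessThan_iff[THEN iffD2, OF assms(1)]
        lessThan_iff[THEN iffD2, OF assms(2)]])
     (use assms(3) in \<open>auto simp: two_point_vec_def inf_min top_enat_def\<close>)

theorem mainTheorem5:
  fixes T N D :: nat and S :: "nat \<Rightarrow> nat \<Rightarrow> enat"
    and j1 j2 j3 t1 t2 t3 :: nat
  assumes "D \<ge> 2" "T \<ge> 3" "N \<ge> 3"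
    and "j1 < N" "j2 < N" "j3 < N" "j1 \<noteq> j2" "j1 \<noteq> j3" "j2 \<noteq> j3"
    and "t1 < T" "t2 < T" "t3 < T" "t1 \<noteq> t2" "t1 \<noteq> t3" "t2 \<noteq> t3"
    and "\<forall>j\<in>{j1, j2, j3}. \<forall>t<T. S t j \<noteq> \<infinity> \<longrightarrow> t \<in> {t1, t2, t3}"
    and "S t1 j1 \<noteq> \<infinity>" "S t1 j2 \<noteq> \<infinity>" "S t1 j3 = \<infinity>"
    and "S t2 j1 \<noteq> \<infinity>" "S t2 j2 = \<infinity>" "S t2 j3 \<noteq> \<infinity>"
    and "S t3 j1 = \<infinity>" "S t3 j2 \<noteq> \<infinity>" "S t3 j3 \<noteq> \<infinity>"
  shows "\<not> tropical_code T N D S"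
proof
  assume code: "tropical_code T N D S"
  obtain \<delta> \<epsilon> \<zeta> \<eta> \<theta> \<kappa> where fin: "S t1 j1 = enat \<delta>" "S t1 j2 = enat \<epsilon>"
    "S t2 j1 = enat \<zeta>" "S t2 j3 = enat \<eta>" "S t3 j2 = enat \<theta>" "S t3 j3 = enat \<kappa>"
    using assms(17,18,20,22,24,25) by (metis not_enat_eq)
  define x where "x = two_point_vec j1 0 j2 (enat (\<kappa> + \<delta> + \<zeta>))"
  define y where "y = two_point_vec j1 0 j3 (enat (\<theta> + \<delta> + \<zeta>))"
  have img: "trop_mult_vec N S x t = min (S t j1) (S t j2 + enat (\<kappa> + \<delta> + \<zeta>))"
    "trop_mult_vec N S y t = min (S t j1) (S t j3 + enat (\<theta> + \<delta> + \<zeta>))" for t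
    unfolding x_def y_def using assms(4-8) by (simp_all add: trop_mult_two_point_vec)
  have "x \<in> vec_space N D" "y \<in> vec_space N D"
    unfolding x_def y_def using assms(1,4-8) by (auto intro: two_point_vec_in_vec_space)
  moreover have "x \<noteq> y"
    using assms(7,9) unfolding x_def y_def two_point_vec_def by (metis enat.distinct(2))
  moreover have "trop_mult_vec N S x t = trop_mult_vec N S y t" if row: "t < T" for t
  proof -
    consider "t = t1" | "t = t2" | "t = t3" | "S t j1 = \<infinity>" "S t j2 = \<infinity>" "S t j3 = \<infinity>"
      using assms(16) row by fastforce
    then show ?thesis
      by cases (simp_all add: img fin assms(19,21,23) ac_simps)
  qed
  ultimately show False
    using code unfolding tropical_code_def by blast
qed

end
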